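(* Let $\mathcal{A}$ be a probabilistic automaton with state set $Q$. Every limit-word of the Markov monoid of $\mathcal{A}$ has $\sharp$-height at most $|Q|$; equivalently, the Markov monoid of $\mathcal{A}$ equals $S_{|Q|}$.
   Context: Fix a finite alphabet $A$ and a probabilistic automaton $\mathcal{A}=(Q,q_0,\Delta,F)$, $\Delta:Q\times A\to\mathcal{D}(Q)$. A limit-word is a map $\mathbf{u}:Q\times Q\to\{0,1\}$ such that every $s$ has some $t$ with $\mathbf{u}(s,t)=1$. Concatenation: $(\mathbf{u}\cdot\mathbf{v})(s,t)=1$ iff there is $q$ with $\mathbf{u}(s,q)=\mathbf{v}(q,t)=1$. $\mathbf{u}$ is idempotent if $\mathbf{u}\cdot\mathbf{u}=\mathbf{u}$; for idempotent $\mathbf{u}$, $s$ is $\mathbf{u}$-recurrent if for all $t$, $\mathbf{u}(s,t)=1\Rightarrow\mathbf{u}(t,s)=1$, and $\mathbf{u}^\sharp(s,t)=1$ iff $\mathbf{u}(s,t)=1$ and $t$ is $\mathbf{u}$-recurrent. For $a\in A$, $\mathbf{a}(s,t)=1$ iff $\Delta(s,a)(t)>0$; $\mathbf{1}$ is the identity. The Markov monoid of $\mathcal{A}$ is the smallest set of limit-words containing $\{\mathbf{a}\mid a\in A\}\cup\{\mathbf{1}\}$ and closed under concatenation and iteration of idempotents. For a set $T$ of limit-words let $\langle T\rangle$ be the set of finite concatenations of elements of $T$. Define $S_0=\langle\{\mathbf{a}\mid a\in A\}\cup\{\mathbf{1}\}\rangle$ and $S_{p+1}=\langle S_p\cup\{\mathbf{u}^\sharp\mid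 \mathbf{u}\in S_p,\ \mathbf{u}\text{ idempotent}\}\rangle$. The $\sharp$-height of a limit-word $\mathbf{u}$ is the least $p$ such that $\mathbf{u}\in S_p$. *)

theory Defs
  imports "HOL-Probability.Probability_Mass_Function"
begin

text \<open>Only the transition function matters for the Markov monoid; initial state and
  final states are carried along for fidelity.\<close>

record ('q, 'a) prob_automaton =
  init :: 'q
  trans :: "'q \<Rightarrow> 'a \<Rightarrow> 'q pmf"
  final :: "'q set"

type_synonym 'q lword = "'q \<Rightarrow> 'q \<Rightarrow> bool"

definition is_limit_word :: "'q lword \<Rightarrow> bool" where
  "is_limit_word u \<longleftrightarrow> (\<forall>s. \<exists>t. u s t)"

definition lconcat :: "'q lword \<Rightarrow> 'q lword \<Rightarrow> 'q lword" where
  "lconcat u v = (\<lambda>s t. \<exists>q. u s q \<and> v q t)"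

definition idempotent_lw :: "'q lword \<Rightarrow> bool" where
  "idempotent_lw u \<longleftrightarrow> lconcat u u = u"

definition recurrent :: "'q lword \<Rightarrow> 'q \<Rightarrow> bool" where
  "recurrent u s \<longleftrightarrow> (\<forall>t. u s t \<longrightarrow> u t s)"

definition sharp :: "'q lword \<Rightarrow> 'q lword" where
  "sharp u = (\<lambda>s t. u s t \<and> recurrent u t)"

definition letter_word :: "('q, 'a) prob_automaton \<Rightarrow> 'a \<Rightarrow> 'q lword" where
  "letter_word M a = (\<lambda>s t. pmf (trans M s a) t > 0)"

definition one_word :: "'q lword" where
  "one_word = (\<lambda>s t. s = t)"

inductive_set markov_monoid :: "('q, 'a) prob_automaton \<Rightarrow> 'q lword set"
  for M :: "('q, 'a) prob_automaton" where
  letter: "letter_word M a \<in> markov_monoid M"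
| one: "one_word \<in> markov_monoid M"
| concat: "u \<in> markov_monoid M \<Longrightarrow> v \<in> markov_monoid M \<Longrightarrow> lconcat u v \<in> markov_monoid M"
| iter: "u \<in> markov_monoid M \<Longrightarrow> idempotent_lw u \<Longrightarrow> sharp u \<in> markov_monoid M"

inductive_set gen :: "'q lword set \<Rightarrow> 'q lword set" for T where
  base: "u \<in> T \<Longrightarrow> u \<in> gen T"
| concat: "u \<in> gen T \<Longrightarrow> v \<in> gen T \<Longrightarrow> lconcat u v \<in> gen T"

fun S_level :: "('q, 'a) prob_automaton \<Rightarrow> nat \<Rightarrow> 'q lword set" where
  "S_level M 0 = gen (range (letter_word M) \<union> {one_word})"
| "S_level M (Suc p) = gen (S_level M p \<union> {sharp u | u. u \<in> S_level M p \<and> idempotent_lw u})"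

definition sharp_height :: "('q, 'a) prob_automaton \<Rightarrow> 'q lword \<Rightarrow> nat" where
  "sharp_height M u = (LEAST p. u \<in> S_level M p)"

end

theory Submission
  imports Defs
begin

text \<open>
  Measure a limit-word \<open>u\<close> by the length of the longest chain, under inclusion, of nonempty
  sets of the form \<open>u(S) = {t. \<exists>s\<in>S. u s t}\<close>. This height is at most \<open>|Q|\<close>, does not
  increase under concatenation on either side, and drops strictly when an idempotent \<open>e\<close>
  with \<open>e\<^sup>\<sharp> \<noteq> e\<close> is iterated: every chain of \<open>e\<^sup>\<sharp>\<close> consists of \<open>e\<close>-invariant sets of
  recurrent states, so it can be extended by the full image \<open>e(Q)\<close>, which contains a
  transient state. By induction on the Markov monoid, a limit-word of height \<open>h\<close> therefore
  lies in level \<open>|Q| - h\<close> of the \<open>\<sharp>\<close>-height hierarchy.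
\<close>

definition lw_image :: "'q lword \<Rightarrow> 'q set \<Rightarrow> 'q set" where
  "lw_image u S = {t. \<exists>s\<in>S. u s t}"

definition image_chain :: "'q lword \<Rightarrow> 'q set set \<Rightarrow> bool" where
  "image_chain u C \<longleftrightarrow> C \<subseteq> range (lw_image u) \<and> {} \<notin> C \<and> chain\<^sub>\<subseteq> C"

definition chain_height :: "('q::finite) lword \<Rightarrow> nat" where
  "chain_height u = Max (card ` Collect (image_chain u))"

lemma card_chain_nonempty_subsets_le:
  assumes "finite A" and "C \<subseteq> Pow A" and "{} \<notin> C" and "chain\<^sub>\<subseteq> C"
  shows "card C \<le> card A"
proof -
  have "inj_on card C"
  proof (rule inj_onI)
    fix X Y assume "X \<in> C" "Y \<in> C" "card X = card Y"
    moreover have "finite X" "finite Y"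
      using \<open>X \<in> C\<close> \<open>Y \<in> C\<close> assms(1,2) finite_subset by blast+
    ultimately show "X = Y"
      using \<open>chain\<^sub>\<subseteq> C\<close> card_subset_eq unfolding chain_subset_def by metis
  qed
  moreover have "card ` C \<subseteq> {1..card A}"
  proof
    fix k assume "k \<in> card ` C"
    then obtain X where "X \<in> C" "k = card X" by blast
    with assms show "k \<in> {1..card A}"
      by (auto simp: Suc_le_eq card_gt_0_iff card_mono finite_subset)
  qed
  ultimately show ?thesis
    using card_mono[of "{1..card A}" "card ` C"] card_image by fastforce
qed

lemma card_image_chain_le: "image_chain (u::('q::finite) lword) C \<Longrightarrow> card C \<le> CARD('q)"
  unfolding image_chain_def by (intro card_chain_nonempty_subsets_le) auto

lemma image_chain_empty: "image_chain u {}"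
  unfolding image_chain_def chain_subset_def by simp

lemma chain_heights_finite_nonempty:
  fixes u :: "('q::finite) lword"
  shows "finite (card ` Collect (image_chain u))" and "card ` Collect (image_chain u) \<noteq> {}"
proof -
  have "card ` Collect (image_chain u) \<subseteq> {..CARD('q)}"
    using card_image_chain_le by auto
  then show "finite (card ` Collect (image_chain u))"
    using finite_subset by blast
  from image_chain_empty show "card ` Collect (image_chain u) \<noteq> {}" by blast
qed

lemma chain_height_le_iff:
  "chain_height (u::('q::finite) lword) \<le> n \<longleftrightarrow> (\<forall>C. image_chain u C \<longrightarrow> card C \<le> n)"
  unfolding chain_height_def using chain_heights_finite_nonempty[of u] by auto

lemma card_le_chain_height: "image_chain (u::('q::finite) lword) C \<Longrightarrow> card C \<le> chain_height u"
  using chain_height_le_iff by blast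

lemma chain_height_le_card: "chain_height (u::('q::finite) lword) \<le> CARD('q)"
  using chain_height_le_iff card_image_chain_le by blast

lemma lw_image_lconcat: "lw_image (lconcat u v) S = lw_image v (lw_image u S)"
  unfolding lw_image_def lconcat_def by blast

lemma image_chain_lconcat_right: "image_chain (lconcat u v) C \<Longrightarrow> image_chain v C"
  unfolding image_chain_def by (auto simp: lw_image_lconcat)

lemma chain_height_lconcat_right: "chain_height (lconcat u v) \<le> chain_height (v::('q::finite) lword)"
  using chain_height_le_iff card_le_chain_height image_chain_lconcat_right by blast

text \<open>
  A chain of images of \<open>u v\<close> is transported to one of \<open>u\<close> by sending \<open>c\<close> to the
  \<open>u\<close>-image of the largest set whose \<open>u v\<close>-image lies in \<open>c\<close>; this map is monotone and
  has \<open>lw_image v\<close> as a left inverse on images of \<open>u v\<close>.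
\<close>

lemma lw_image_lconcat_left_inverse:
  assumes "c = lw_image (lconcat u v) S"
  shows "lw_image v (lw_image u {s. lw_image (lconcat u v) {s} \<subseteq> c}) = c"
proof
  show "lw_image v (lw_image u {s. lw_image (lconcat u v) {s} \<subseteq> c}) \<subseteq> c"
    unfolding lw_image_def lconcat_def by blast
  show "c \<subseteq> lw_image v (lw_image u {s. lw_image (lconcat u v) {s} \<subseteq> c})"
    unfolding assms lw_image_def lconcat_def by blast
qed

lemma chain_height_lconcat_left: "chain_height (lconcat u v) \<le> chain_height (u::('q::finite) lword)"
  unfolding chain_height_le_iff
proof (intro allI impI)
  fix C assume C: "image_chain (lconcat u v) C"
  define L where "L c = lw_image u {s. lw_image (lconcat u v) {s} \<subseteq> c}" for c
  have left_inverse: "lw_image v (L c) = c" if "c \<in> C" for c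
  proof -
    have "c \<in> range (lw_image (lconcat u v))"
      using C that unfolding image_chain_def by blast
    then obtain S where "c = lw_image (lconcat u v) S"
      by (rule rangeE)
    then show ?thesis
      unfolding L_def by (rule lw_image_lconcat_left_inverse)
  qed
  have "inj_on L C"
    using left_inverse by (rule inj_on_inverseI)
  moreover have "image_chain u (L ` C)"
    unfolding image_chain_def
  proof (intro conjI)
    show "L ` C \<subseteq> range (lw_image u)"
      unfolding L_def by blast
    show "{} \<notin> L ` C"
    proof
      assume "{} \<in> L ` C"
      then obtain c where "c \<in> C" "L c = {}"
        by blast
      then have "c = {}"
        using left_inverse[of c] unfolding lw_image_def by simp
      with C \<open>c \<in> C\<close> show False
        unfolding image_chain_def by blast
    qed
    have L_mono: "L c \<subseteq> L c'" if "c \<subseteq> c'" for c c'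
      using that unfolding L_def lw_image_def by blast
    show "chain\<^sub>\<subseteq> (L ` C)"
      unfolding chain_subset_def
    proof (intro ballI)
      fix A B assume "A \<in> L ` C" "B \<in> L ` C"
      then obtain c c' where "c \<in> C" "c' \<in> C" "A = L c" "B = L c'"
        by blast
      moreover have "c \<subseteq> c' \<or> c' \<subseteq> c"
        using C \<open>c \<in> C\<close> \<open>c' \<in> C\<close> unfolding image_chain_def chain_subset_def by blast
      ultimately show "A \<subseteq> B \<or> B \<subseteq> A"
        using L_mono by blast
    qed
  qed
  then have "card (L ` C) \<le> chain_height u"
    by (rule card_le_chain_height)
  with \<open>inj_on L C\<close> show "card C \<le> chain_height u"
    by (simp add: card_image)
qed

lemma idempotent_lw_trans:
  assumes "idempotent_lw e" and "e s q" and "e q t"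
  shows "e s t"
proof -
  have "lconcat e e s t"
    unfolding lconcat_def using assms(2,3) by blast
  then show ?thesis
    using assms(1) unfolding idempotent_lw_def by simp
qed

lemma recurrent_successor:
  assumes "idempotent_lw e" and "recurrent e t" and "e t r"
  shows "recurrent e r"
  unfolding recurrent_def
proof (intro allI impI)
  fix q assume "e r q"
  with assms(3) have "e t q"
    by (rule idempotent_lw_trans[OF assms(1)])
  then have "e q t"
    using assms(2) unfolding recurrent_def by blast
  then show "e q r"
    using assms(3) by (rule idempotent_lw_trans[OF assms(1)])
qed

lemma recurrent_self_loop:
  assumes "is_limit_word e" and "idempotent_lw e" and "recurrent e t"
  shows "e t t"
proof -
  obtain r where "e t r"
    using assms(1) unfolding is_limit_word_def by blast
  moreover have "e r t"
    using assms(3) \<open>e t r\<close> unfolding recurrent_def by blast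
  ultimately show ?thesis
    by (rule idempotent_lw_trans[OF assms(2)])
qed

lemma lw_image_sharp_subset: "lw_image (sharp e) S \<subseteq> lw_image e UNIV \<inter> {t. recurrent e t}"
  unfolding lw_image_def sharp_def by blast

lemma lw_image_sharp_invariant:
  assumes "is_limit_word e" and "idempotent_lw e"
  shows "lw_image e (lw_image (sharp e) S) = lw_image (sharp e) S"
proof
  show "lw_image e (lw_image (sharp e) S) \<subseteq> lw_image (sharp e) S"
  proof
    fix t assume "t \<in> lw_image e (lw_image (sharp e) S)"
    then obtain s r where "s \<in> S" and sr: "e s r" "recurrent e r" and "e r t"
      unfolding lw_image_def sharp_def by blast
    from sr(1) \<open>e r t\<close> have "e s t"
      by (rule idempotent_lw_trans[OF assms(2)])
    moreover from sr(2) \<open>e r t\<close> have "recurrent e t"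
      by (rule recurrent_successor[OF assms(2)])
    ultimately show "t \<in> lw_image (sharp e) S"
      using \<open>s \<in> S\<close> unfolding lw_image_def sharp_def by auto
  qed
  show "lw_image (sharp e) S \<subseteq> lw_image e (lw_image (sharp e) S)"
  proof
    fix t assume t: "t \<in> lw_image (sharp e) S"
    then have "recurrent e t"
      unfolding lw_image_def sharp_def by auto
    then have "e t t"
      by (rule recurrent_self_loop[OF assms])
    with t show "t \<in> lw_image e (lw_image (sharp e) S)"
      unfolding lw_image_def by auto
  qed
qed

lemma chain_height_sharp_less:
  fixes e :: "('q::finite) lword"
  assumes "is_limit_word e" and "idempotent_lw e" and "sharp e \<noteq> e"
  shows "chain_height (sharp e) < chain_height e"
proof -
  define I where "I = lw_image e UNIV"
  have "\<exists>s t. sharp e s t \<noteq> e s t"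
    using assms(3) by (simp add: fun_eq_iff)
  then obtain s t where "sharp e s t \<noteq> e s t"
    by blast
  then have "t \<in> I" and transient: "\<not> recurrent e t"
    unfolding I_def lw_image_def sharp_def by auto
  have extend: "Suc (card C) \<le> chain_height e" if C: "image_chain (sharp e) C" for C
  proof -
    have member_props: "d \<in> range (lw_image e) \<and> d \<subseteq> I \<and> t \<notin> d" if "d \<in> C" for d
    proof -
      have "d \<in> range (lw_image (sharp e))"
        using C that unfolding image_chain_def by blast
      then obtain S where d: "d = lw_image (sharp e) S"
        by (rule rangeE)
      then have "d = lw_image e d"
        using lw_image_sharp_invariant[OF assms(1,2)] by simp
      then have "d \<in> range (lw_image e)"
        by (metis rangeI)
      moreover have "d \<subseteq> I" and "t \<notin> d"
        using lw_image_sharp_subset[of e S] transient unfolding d I_def by auto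
      ultimately show ?thesis
        by simp
    qed
    have "image_chain e (insert I C)"
      unfolding image_chain_def
    proof (intro conjI)
      show "insert I C \<subseteq> range (lw_image e)"
        using member_props unfolding I_def by auto
      show "{} \<notin> insert I C"
        using C \<open>t \<in> I\<close> unfolding image_chain_def by auto
      show "chain\<^sub>\<subseteq> (insert I C)"
        using C member_props unfolding image_chain_def chain_subset_def by auto
    qed
    moreover have "I \<notin> C"
      using member_props \<open>t \<in> I\<close> by auto
    ultimately show ?thesis
      using card_le_chain_height[of e "insert I C"] by (simp add: card_insert_disjoint)
  qed
  have "chain_height (sharp e) \<le> chain_height e - 1"
    unfolding chain_height_le_iff using extend by fastforce
  moreover have "1 \<le> chain_height e"
    using extend[OF image_chain_empty] by simp
  ultimately show ?thesis
    by linarith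
qed

text \<open>
  From \<open>s\<close>, go to a state \<open>t\<close> whose set of successors has minimal size; every successor
  \<open>r\<close> of \<open>t\<close> has the same successors as \<open>t\<close>, hence is recurrent.
\<close>

lemma is_limit_word_sharp:
  fixes e :: "('q::finite) lword"
  assumes "is_limit_word e" and "idempotent_lw e"
  shows "is_limit_word (sharp e)"
  unfolding is_limit_word_def
proof
  fix s
  obtain t0 where "e s t0"
    using assms(1) unfolding is_limit_word_def by blast
  then obtain t where "e s t" and t_min: "\<And>q. e s q \<Longrightarrow> card {r. e t r} \<le> card {r. e q r}"
    using ex_has_least_nat[of "e s" t0 "\<lambda>t. card {r. e t r}"] by blast
  have same_successors: "{r. e q r} = {r. e t r}" if "e t q" for q
  proof -
    have sub: "{r. e q r} \<subseteq> {r. e t r}"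
      using idempotent_lw_trans[OF assms(2) that] by blast
    have "card {r. e t r} \<le> card {r. e q r}"
      using t_min idempotent_lw_trans[OF assms(2) \<open>e s t\<close> that] by blast
    moreover have "card {r. e q r} \<le> card {r. e t r}"
      using sub by (rule card_mono[OF finite])
    ultimately show ?thesis
      using sub card_subset_eq[OF finite] by (metis le_antisym)
  qed
  obtain r where "e t r"
    using assms(1) unfolding is_limit_word_def by blast
  have "recurrent e r"
    unfolding recurrent_def
  proof (intro allI impI)
    fix q assume "e r q"
    with \<open>e t r\<close> have "e t q"
      by (rule idempotent_lw_trans[OF assms(2)])
    with \<open>e t r\<close> show "e q r"
      using same_successors by auto
  qed
  moreover have "e s r"
    using \<open>e s t\<close> \<open>e t r\<close> by (rule idempotent_lw_trans[OF assms(2)])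
  ultimately show "\<exists>r. sharp e s r"
    unfolding sharp_def by auto
qed

lemma is_limit_word_letter_word: "is_limit_word (letter_word M a)"
  unfolding is_limit_word_def letter_word_def
  using set_pmf_not_empty pmf_positive by fastforce

lemma is_limit_word_markov_monoid:
  "u \<in> markov_monoid M \<Longrightarrow> is_limit_word (u :: ('q::finite) lword)"
proof (induction rule: markov_monoid.induct)
  case (letter a)
  show ?case
    by (rule is_limit_word_letter_word)
next
  case one
  show ?case
    unfolding is_limit_word_def one_word_def by auto
next
  case (concat u v)
  then show ?case
    unfolding is_limit_word_def lconcat_def by metis
next
  case (iter u)
  then show ?case
    by (intro is_limit_word_sharp)
qed

lemma gen_subset_closed:
  assumes "T \<subseteq> A" and "\<And>u v. u \<in> A \<Longrightarrow> v \<in> A \<Longrightarrow> lconcat u v \<in> A"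
  shows "gen T \<subseteq> A"
proof
  fix u assume "u \<in> gen T"
  then show "u \<in> A"
    by (induction rule: gen.induct) (use assms in blast)+
qed

lemma lconcat_S_level: "u \<in> S_level M p \<Longrightarrow> v \<in> S_level M p \<Longrightarrow> lconcat u v \<in> S_level M p"
  by (cases p) (auto intro: gen.concat)

lemma S_level_mono: "p \<le> q \<Longrightarrow> S_level M p \<subseteq> S_level M q"
proof (rule lift_Suc_mono_le[of "S_level M"])
  show "S_level M n \<subseteq> S_level M (Suc n)" for n
    by (auto intro: gen.base)
qed

lemma sharp_in_S_level_Suc:
  "u \<in> S_level M p \<Longrightarrow> idempotent_lw u \<Longrightarrow> sharp u \<in> S_level M (Suc p)"
  by (auto intro: gen.base)

lemma S_level_subset_markov_monoid: "S_level M p \<subseteq> markov_monoid M"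
proof (induction p)
  case 0
  show ?case
    unfolding S_level.simps by (rule gen_subset_closed) (auto intro: markov_monoid.intros)
next
  case (Suc p)
  show ?case
    unfolding S_level.simps
    by (rule gen_subset_closed) (use Suc in \<open>auto intro: markov_monoid.intros\<close>)
qed

lemma markov_monoid_in_S_level:
  fixes M :: "('q::finite, 'a) prob_automaton"
  assumes "u \<in> markov_monoid M"
  shows "u \<in> S_level M (CARD('q) - chain_height u)"
  using assms
proof (induction rule: markov_monoid.induct)
  case (letter a)
  have "letter_word M a \<in> S_level M 0"
    by (auto intro: gen.base)
  with S_level_mono[OF le0] show ?case
    by (rule subsetD)
next
  case one
  have "one_word \<in> S_level M 0"
    by (auto intro: gen.base)
  with S_level_mono[OF le0] show ?case
    by (rule subsetD)
next
  case (concat u v)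
  have "CARD('q) - chain_height u \<le> CARD('q) - chain_height (lconcat u v)"
    and "CARD('q) - chain_height v \<le> CARD('q) - chain_height (lconcat u v)"
    using chain_height_lconcat_left[of u v] chain_height_lconcat_right[of u v] by simp_all
  then have "u \<in> S_level M (CARD('q) - chain_height (lconcat u v))"
    and "v \<in> S_level M (CARD('q) - chain_height (lconcat u v))"
    using S_level_mono concat.IH by (blast dest: subsetD)+
  then show ?case
    by (rule lconcat_S_level)
next
  case (iter u)
  show ?case
  proof (cases "sharp u = u")
    case False
    then have "chain_height (sharp u) < chain_height u"
      using chain_height_sharp_less is_limit_word_markov_monoid iter.hyps by blast
    then have "Suc (CARD('q) - chain_height u) \<le> CARD('q) - chain_height (sharp u)"
      using chain_height_le_card[of u] by linarith
    then have "S_level M (Suc (CARD('q) - chain_height u)) \<subseteq> S_level M (CARD('q) - chain_height (sharp u))"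
      by (rule S_level_mono)
    then show ?thesis
      using sharp_in_S_level_Suc[OF iter.IH iter.hyps(2)] by (rule subsetD)
  qed (use iter.IH in simp)
qed

theorem theorem4p7:
  fixes M :: "('q::finite, 'a::finite) prob_automaton"
  shows "(\<forall>u \<in> markov_monoid M. u \<in> S_level M CARD('q) \<and> sharp_height M u \<le> CARD('q))
         \<and> markov_monoid M = S_level M CARD('q)"
proof -
  have in_top_level: "u \<in> S_level M CARD('q)" if "u \<in> markov_monoid M" for u
    using markov_monoid_in_S_level[OF that] S_level_mono diff_le_self by blast
  moreover have "sharp_height M u \<le> CARD('q)" if "u \<in> markov_monoid M" for u
    unfolding sharp_height_def using in_top_level[OF that] by (rule Least_le)
  moreover have "markov_monoid M = S_level M CARD('q)"
    using in_top_level S_level_subset_markov_monoid by (rule subset_antisym[OF subsetI])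
  ultimately show ?thesis
    by blast
qed

end
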